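(* Let $X$ be a normal topological space in which every $\Lambda$-set is open, and let $g,f:X\to\mathbb{R}$ be functions such that $f$ is lower semi-contra-continuous, $g$ is upper semi-contra-continuous, and $f\le g$. Then there exists a contra-continuous function $h:X\to\mathbb{R}$ such that $f\le h\le g$.
   Context: A $\Lambda$-set in $X$ is an intersection of open sets. A function $f:X\to\mathbb{R}$ is upper semi-contra-continuous (resp. lower semi-contra-continuous) if $f^{-1}(-\infty,t)$ (resp. $f^{-1}(t,+\infty)$) is closed in $X$ for every real $t$. A function $h:X\to\mathbb{R}$ is contra-continuous if the preimage of every open subset of $\mathbb{R}$ is closed in $X$. $f\le g$ means $f(x)\le g(x)$ for all $x\in X$. *)

theory Defs
  imports "HOL-Analysis.Analysis"
begin

definition lambda_set :: "'a topology \<Rightarrow> 'a set \<Rightarrow> bool" where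
  "lambda_set X A \<longleftrightarrow> (\<exists>\<U>. (\<forall>U\<in>\<U>. openin X U) \<and> A = topspace X \<inter> \<Inter>\<U>)"

definition upper_semi_contra_continuous :: "'a topology \<Rightarrow> ('a \<Rightarrow> real) \<Rightarrow> bool" where
  "upper_semi_contra_continuous X f \<longleftrightarrow>
     (\<forall>t::real. closedin X {x \<in> topspace X. f x < t})"

definition lower_semi_contra_continuous :: "'a topology \<Rightarrow> ('a \<Rightarrow> real) \<Rightarrow> bool" where
  "lower_semi_contra_continuous X f \<longleftrightarrow>
     (\<forall>t::real. closedin X {x \<in> topspace X. t < f x})"

definition contra_continuous :: "'a topology \<Rightarrow> ('a \<Rightarrow> real) \<Rightarrow> bool" where
  "contra_continuous X h \<longleftrightarrow>
     (\<forall>U::real set. open U \<longrightarrow> closedin X {x \<in> topspace X. h x \<in> U})"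

end

theory Submission
  imports Defs
begin

text \<open>When every \<open>\<Lambda>\<close>-set is open, the kernel of each point (the intersection of its
  open neighbourhoods) is open, so any function that is constant along the specialization
  preorder has open, hence also closed, preimages. Normality makes "the closures of \<open>{x}\<close>
  and \<open>{y}\<close> meet" an equivalence relation compatible with specialization, so
  \<open>h x = Sup (f ` [x])\<close> over the class \<open>[x]\<close> of \<open>x\<close> is such a function. Lower (upper)
  semi-contra-continuity makes \<open>f\<close> (\<open>g\<close>) monotone along specialization, which gives
  \<open>f y \<le> g x\<close> for all \<open>y \<in> [x]\<close> and thus \<open>f \<le> h \<le> g\<close>.\<close>

definition specializes :: "'a topology \<Rightarrow> 'a \<Rightarrow> 'a \<Rightarrow> bool" where
  "specializes X x y \<longleftrightarrow> y \<in> X closure_of {x}"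

lemma specializes_iff:
  "specializes X x y \<longleftrightarrow>
     x \<in> topspace X \<and> y \<in> topspace X \<and> (\<forall>U. openin X U \<and> y \<in> U \<longrightarrow> x \<in> U)"
  unfolding specializes_def in_closure_of by auto

lemma specializes_refl: "x \<in> topspace X \<Longrightarrow> specializes X x x"
  by (simp add: specializes_iff)

lemma specializes_trans: "specializes X x y \<Longrightarrow> specializes X y z \<Longrightarrow> specializes X x z"
  by (simp add: specializes_iff)

lemma closedin_specializes: "closedin X C \<Longrightarrow> x \<in> C \<Longrightarrow> specializes X x y \<Longrightarrow> y \<in> C"
  unfolding specializes_def by (meson closure_of_minimal empty_subsetI insert_subset subsetD)

lemma lower_semi_contra_continuous_specializes:
  assumes "lower_semi_contra_continuous X f" and "specializes X x y"
  shows "f x \<le> f y"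
proof (rule ccontr)
  assume "\<not> f x \<le> f y"
  moreover have "closedin X {z \<in> topspace X. f y < f z}"
    using assms(1) by (simp add: lower_semi_contra_continuous_def)
  moreover have "x \<in> topspace X"
    using assms(2) by (simp add: specializes_iff)
  ultimately have "y \<in> {z \<in> topspace X. f y < f z}"
    using closedin_specializes assms(2) by (metis (lifting) mem_Collect_eq not_le)
  then show False
    by simp
qed

lemma upper_semi_contra_continuous_specializes:
  assumes "upper_semi_contra_continuous X g" and "specializes X x y"
  shows "g y \<le> g x"
proof (rule ccontr)
  assume "\<not> g y \<le> g x"
  moreover have "closedin X {z \<in> topspace X. g z < g y}"
    using assms(1) by (simp add: upper_semi_contra_continuous_def)
  moreover have "x \<in> topspace X"
    using assms(2) by (simp add: specializes_iff)
  ultimately have "y \<in> {z \<in> topspace X. g z < g y}"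
    using closedin_specializes assms(2) by (metis (lifting) mem_Collect_eq not_le)
  then show False
    by simp
qed

lemma normal_space_common_specialization:
  assumes "normal_space X" and ya: "specializes X y a" and yb: "specializes X y b"
  shows "\<exists>u. specializes X a u \<and> specializes X b u"
proof (rule ccontr)
  assume "\<nexists>u. specializes X a u \<and> specializes X b u"
  then have "disjnt (X closure_of {a}) (X closure_of {b})"
    unfolding disjnt_iff specializes_def by blast
  moreover have "closedin X (X closure_of {a})" "closedin X (X closure_of {b})"
    by simp_all
  ultimately obtain U V where UV: "openin X U" "openin X V" "disjnt U V"
    "X closure_of {a} \<subseteq> U" "X closure_of {b} \<subseteq> V"
    using assms(1) unfolding normal_space_def by meson
  have "specializes X a a" "specializes X b b"
    using ya yb by (simp_all add: specializes_iff)
  then have "a \<in> U" "b \<in> V"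
    using UV(4,5) by (auto simp: specializes_def)
  then have "y \<in> U" "y \<in> V"
    using UV(1,2) ya yb by (simp_all add: specializes_iff)
  with UV(3) show False
    by (auto simp: disjnt_def)
qed

lemma openin_if_generization_closed:
  assumes lambda_open: "\<And>A. lambda_set X A \<Longrightarrow> openin X A"
    and "S \<subseteq> topspace X"
    and generization_closed: "\<And>x y. x \<in> S \<Longrightarrow> specializes X y x \<Longrightarrow> y \<in> S"
  shows "openin X S"
proof (subst openin_subopen, intro ballI)
  fix x assume "x \<in> S"
  define N where "N = topspace X \<inter> \<Inter>{V. openin X V \<and> x \<in> V}"
  have "lambda_set X N"
    unfolding lambda_set_def N_def by (intro exI[of _ "{V. openin X V \<and> x \<in> V}"]) auto
  then have "openin X N"
    by (rule lambda_open)
  moreover have "x \<in> N"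
    using \<open>x \<in> S\<close> assms(2) N_def by auto
  moreover have "N \<subseteq> S"
    using \<open>x \<in> S\<close> assms(2) generization_closed
    by (auto simp: N_def specializes_iff)
  ultimately show "\<exists>T. openin X T \<and> x \<in> T \<and> T \<subseteq> S"
    by blast
qed

lemma contra_continuous_if_specialization_invariant:
  assumes "\<And>A. lambda_set X A \<Longrightarrow> openin X A"
    and invariant: "\<And>x y. specializes X x y \<Longrightarrow> h x = h y"
  shows "contra_continuous X h"
  unfolding contra_continuous_def
proof (intro allI impI)
  fix U :: "real set"
  have "openin X (topspace X - {x \<in> topspace X. h x \<in> U})"
    using invariant by (intro openin_if_generization_closed[OF assms(1)])
      (auto simp: specializes_iff)
  then show "closedin X {x \<in> topspace X. h x \<in> U}"
    by (simp add: closedin_def)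
qed

definition specialization_class :: "'a topology \<Rightarrow> 'a \<Rightarrow> 'a set" where
  "specialization_class X x = {y. \<exists>w. specializes X x w \<and> specializes X y w}"

lemma self_in_specialization_class: "x \<in> topspace X \<Longrightarrow> x \<in> specialization_class X x"
  using specializes_refl by (fastforce simp: specialization_class_def)

lemma specialization_class_eq:
  assumes "normal_space X" and "specializes X x y"
  shows "specialization_class X x = specialization_class X y"
proof (intro set_eqI iffI)
  fix z assume "z \<in> specialization_class X x"
  then obtain w where w: "specializes X x w" "specializes X z w"
    by (auto simp: specialization_class_def)
  then obtain u where "specializes X w u" "specializes X y u"
    using normal_space_common_specialization[OF assms(1) w(1) assms(2)] by blast
  with w(2) show "z \<in> specialization_class X y"
    unfolding specialization_class_def by (blast intro: specializes_trans)
next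
  fix z assume "z \<in> specialization_class X y"
  then obtain w where "specializes X y w" "specializes X z w"
    by (auto simp: specialization_class_def)
  with assms(2) show "z \<in> specialization_class X x"
    unfolding specialization_class_def by (blast intro: specializes_trans)
qed

lemma specialization_class_bound:
  assumes "lower_semi_contra_continuous X f" "upper_semi_contra_continuous X g"
    and "\<And>x. x \<in> topspace X \<Longrightarrow> f x \<le> g x"
    and "y \<in> specialization_class X x"
  shows "f y \<le> g x"
proof -
  obtain w where w: "specializes X x w" "specializes X y w"
    using assms(4) by (auto simp: specialization_class_def)
  have "f y \<le> f w"
    using lower_semi_contra_continuous_specializes[OF assms(1) w(2)] .
  also have "\<dots> \<le> g w"
    using assms(3) w(1) by (simp add: specializes_iff)
  also have "\<dots> \<le> g x"
    using upper_semi_contra_continuous_specializes[OF assms(2) w(1)] .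
  finally show ?thesis .
qed

theorem corollary2:
  fixes X :: "'a topology" and f g :: "'a \<Rightarrow> real"
  assumes "normal_space X"
    and "\<And>A. lambda_set X A \<Longrightarrow> openin X A"
    and "lower_semi_contra_continuous X f"
    and "upper_semi_contra_continuous X g"
    and "\<And>x. x \<in> topspace X \<Longrightarrow> f x \<le> g x"
  shows "\<exists>h. contra_continuous X h \<and>
           (\<forall>x\<in>topspace X. f x \<le> h x \<and> h x \<le> g x)"
proof -
  define h where "h x = Sup (f ` specialization_class X x)" for x
  have "contra_continuous X h"
    using assms(1,2) by (intro contra_continuous_if_specialization_invariant)
      (simp_all add: h_def specialization_class_eq)
  moreover have "f x \<le> h x \<and> h x \<le> g x" if "x \<in> topspace X" for x
  proof
    have bound: "\<And>y. y \<in> specialization_class X x \<Longrightarrow> f y \<le> g x"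
      using specialization_class_bound[OF assms(3-5)] .
    have "x \<in> specialization_class X x"
      using that by (rule self_in_specialization_class)
    then show "f x \<le> h x" "h x \<le> g x"
      unfolding h_def using bound
      by (auto intro!: cSup_upper cSup_least bdd_aboveI2)
  qed
  ultimately show ?thesis
    by blast
qed

end
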